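(* Assume the standing setting below and run the DMFW algorithm with $\gamma_k=\frac{2}{k+1}$ and $\eta_k=\frac{2}{k+2}$. Then for every $i\in\mathcal N$ and $k\ge1$, $$\mathbb E\|y_k^i\|\le\psi.$$
   Context: Setting. There are $n$ agents $\mathcal N=\{1,\dots,n\}$ connected by a connected graph $\mathcal G=(\mathcal N,\mathcal E)$ with weight matrix $C=[c_{ij}]\in\mathbb R^{n\times n}$, where $c_{ij}\ge 0$ and $c_{ij}=0$ whenever $j\ne i$ and $(i,j)\notin\mathcal E$. $C$ is doubly stochastic, i.e. all row sums and all column sums equal $1$. Let $\lambda$ be the second largest eigenvalue of $C$ in magnitude. It is assumed that $|\lambda|<1$ and that for all vectors $x^1,\dots,x^n\in\mathbb R^p$, with $\bar x=\frac1n\sum_i x^i$ and $\hat x^i=\sum_j c_{ij}x^j$, one has $\big(\sum_i\|\hat x^i-\bar x\|^2\big)^{1/2}\le|\lambda|\big(\sum_i\|x^i-\bar x\|^2\big)^{1/2}$. Let $k_0$ be the smallest positive integer with $|\lambda|\le (k_0/(k_0+1))^2$. Problem data. $\mathcal X\subset\mathbb R^p$ is convex and compact with diameter $D$, i.e. $\|x-x'\|\le D$ for all $x,x'\in\mathcal X$. For each $i$, $\xi^i$ is a random variable. The function $f_i(\cdot,\xi)$ is differentiable with $L$-Lipschitz gradient for every $\xi$. $F_i(x)=\mathbb E[f_i(x,\xi^i)]$ is differentiable with $\nabla F_i(x)=\mathbb E[\nabla f_i(x,\xi^i)]$ and $L$-Lipschitz gradient. For all $x\in\mathcal X$ and $i$,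 $\mathbb E\|\nabla F_i(x)-\nabla f_i(x,\xi^i)\|^2\le\delta^2$. Set $F=\frac1n\sum_{i=1}^nF_i$. $G>0$ is a constant with $\mathbb E\|\nabla f_i(x,\xi^i)\|^2\le G^2$ and $\mathbb E\|\nabla f_i(x,\xi^i)\|\le G$ for all $x\in\mathcal X$ and $i\in\mathcal N$. DMFW algorithm. Fix step sizes $\gamma_k,\eta_k\in(0,1]$ and deterministic initial points $x_1^i\in\mathcal X$. The samples $\xi_k^i$ ($k\ge1$, $i\in\mathcal N$) are mutually independent, and $\xi_k^i$ has the distribution of $\xi^i$. For $k=1,2,\dots$ and each $i$: - $\hat x_k^i=\sum_{j=1}^n c_{ij}x_k^j$. - For $k=1$: $y_1^i=s_1^i=\nabla f_i(\hat x_1^i,\xi_1^i)$. For $k\ge2$: $y_k^i=(1-\gamma_k)y_{k-1}^i+\nabla f_i(\hat x_k^i,\xi_k^i)-(1-\gamma_k)\nabla f_i(\hat x_{k-1}^i,\xi_k^i)$ and $s_k^i=\sum_j c_{ij}s_{k-1}^j+y_k^i-y_{k-1}^i$. - $p_k^i=\sum_j c_{ij}s_k^j$. - $\theta_k^i\in\arg\min_{\phi\in\mathcal X}\langle p_k^i,\phi\rangle$. - $x_{k+1}^i=\hat x_k^i+\eta_k(\theta_k^i-\hat x_k^i)$. Constants: - $C_1=k_0\sqrt n D$. - $\psi=\max\{\max_i\mathbb E\|y_1^i\|,\ 2G+2L(D+2C_1)\}$. *)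

theory Defs
  imports "HOL-Probability.Probability" "Jordan_Normal_Form.Char_Poly"
begin

definition second_eig_mod :: "real mat \<Rightarrow> real" where
  "second_eig_mod C =
     rev (sorted_list_of_multiset
            (image_mset cmod (proots (char_poly (map_mat complex_of_real C))))) ! 1"

definition k0_of :: "real \<Rightarrow> nat" where
  "k0_of lam = (LEAST k::nat. 0 < k \<and> \<bar>lam\<bar> \<le> (real k / (real k + 1))\<^sup>2)"

end

theory Submission
  imports Defs
begin

text \<open>The bound holds pathwise up to a final expectation. Doubly stochastic mixing that contracts
  disagreement by a factor \<open>|\<lambda>| \<le> k\<^sub>0/(k\<^sub>0+1)\<close>, combined with Frank--Wolfe steps of size
  \<open>2/(k+2)\<close>, makes the consensus error of the iterates decay like \<open>4k\<^sub>0\<surd>n D/k\<close>; hence consecutive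
  mixed iterates satisfy \<open>k \<parallel>x\<^sub>k\<^sub>+\<^sub>1 - x\<^sub>k\<parallel> \<le> 2D + 8C\<^sub>1\<close>. With \<open>L\<close>-Lipschitz stochastic gradients the
  momentum recursion gives \<open>\<parallel>y\<^sub>k\<^sub>+\<^sub>1\<parallel> \<le> (1-\<gamma>)\<parallel>y\<^sub>k\<parallel> + \<gamma>(\<parallel>\<nabla>f(z\<^sub>0,\<xi>\<^sub>k\<^sub>+\<^sub>1)\<parallel> + LD) + L(2D + 8C\<^sub>1)/(k+2)\<close>
  for a fixed \<open>z\<^sub>0 \<in> X\<close>. Comparing with the deterministic point \<open>z\<^sub>0\<close> rather than with the iterate
  avoids any measurability requirement on the iterates: the right-hand sides form an integrable
  dominating sequence whose expectations stay below \<open>\<psi>\<close> by induction.\<close>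

lemma averaging_recursion_decay:
  fixes e :: "nat \<Rightarrow> real" and r U :: real and kk m :: nat
  assumes kk: "1 \<le> kk" and r: "0 \<le> r" "r \<le> real kk / (real kk + 1)" and U: "0 \<le> U"
    and init: "e 1 \<le> U"
    and step: "\<And>m. 1 \<le> m \<Longrightarrow>
      e (Suc m) \<le> (1 - 2 / (real m + 2)) * (r * e m) + 2 / (real m + 2) * U"
    and m: "1 \<le> m"
  shows "real m * e m \<le> 4 * real kk * U"
  using m
proof (induction m rule: nat_induct_at_least)
  case base
  then show ?case using init kk U mult_right_mono[of 1 "4 * real kk" U] by simp
next
  case (Suc m)
  have absorb: "r * (4 * real kk) + 2 \<le> 4 * real kk"
  proof -
    have "r * (4 * real kk) \<le> real kk / (real kk + 1) * (4 * real kk)"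
      using r by (intro mult_right_mono) auto
    also have "\<dots> \<le> 4 * real kk - 2"
      using kk by (simp add: field_simps)
    finally show ?thesis by simp
  qed
  have ratio: "1 - 2 / (real m + 2) = real m / (real m + 2)"
    by (simp add: field_simps)
  have "(1 - 2 / (real m + 2)) * (r * e m) + 2 / (real m + 2) * U
      = (r * (real m * e m) + 2 * U) / (real m + 2)"
    unfolding ratio
    by (simp add: add_divide_distrib mult.left_commute)
  with step[OF Suc.hyps] have "e (Suc m) \<le> (r * (real m * e m) + 2 * U) / (real m + 2)"
    by simp
  also have "\<dots> \<le> (r * (4 * real kk * U) + 2 * U) / (real m + 2)"
    using Suc.IH r(1) by (intro divide_right_mono add_right_mono mult_left_mono) auto
  also have "\<dots> \<le> 4 * real kk * U / (real m + 2)"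
    using mult_right_mono[OF absorb U] by (intro divide_right_mono) (auto simp: algebra_simps)
  finally have "real (Suc m) * e (Suc m) \<le> real (Suc m) * (4 * real kk * U / (real m + 2))"
    by (intro mult_left_mono) auto
  also have "\<dots> \<le> 4 * real kk * U"
    using U kk by (simp add: field_simps)
  finally show ?case .
qed

lemma k0_of_spec:
  assumes "\<bar>lam\<bar> < 1"
  shows "0 < k0_of lam" "\<bar>lam\<bar> \<le> (real (k0_of lam) / (real (k0_of lam) + 1))\<^sup>2"
proof -
  obtain K :: nat where K: "2 / (1 - \<bar>lam\<bar>) \<le> real K"
    using real_arch_simple by blast
  moreover have "0 < 2 / (1 - \<bar>lam\<bar>)"
    using assms by simp
  ultimately have "0 < K"
    by (metis order_less_le_trans of_nat_0_less_iff)
  have "2 \<le> (real K + 1) * (1 - \<bar>lam\<bar>)"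
    using K assms by (simp add: divide_le_eq algebra_simps)
  then have "\<bar>lam\<bar> \<le> 1 - 2 / (real K + 1)"
    by (simp add: field_simps)
  also have "\<dots> \<le> (1 - 1 / (real K + 1))\<^sup>2"
    by (simp add: power2_eq_square algebra_simps)
  also have "\<dots> = (real K / (real K + 1))\<^sup>2"
    by (simp add: field_simps)
  finally have "0 < K \<and> \<bar>lam\<bar> \<le> (real K / (real K + 1))\<^sup>2"
    using \<open>0 < K\<close> by simp
  then have "0 < k0_of lam \<and> \<bar>lam\<bar> \<le> (real (k0_of lam) / (real (k0_of lam) + 1))\<^sup>2"
    unfolding k0_of_def by (rule LeastI)
  then show "0 < k0_of lam" "\<bar>lam\<bar> \<le> (real (k0_of lam) / (real (k0_of lam) + 1))\<^sup>2"
    by auto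
qed

lemma abs_le_k0_of_ratio:
  assumes "\<bar>lam\<bar> < 1"
  shows "\<bar>lam\<bar> \<le> real (k0_of lam) / (real (k0_of lam) + 1)"
proof -
  have "(real (k0_of lam) / (real (k0_of lam) + 1))\<^sup>2 \<le> real (k0_of lam) / (real (k0_of lam) + 1)"
    unfolding power2_eq_square by (rule mult_left_le_one_le) auto
  then show ?thesis
    using k0_of_spec(2)[OF assms] by linarith
qed

locale doubly_stochastic =
  fixes n :: nat and c :: "nat \<Rightarrow> nat \<Rightarrow> real"
  assumes n_pos: "0 < n"
    and nonneg: "\<And>i j. i < n \<Longrightarrow> j < n \<Longrightarrow> 0 \<le> c i j"
    and row_sum: "\<And>i. i < n \<Longrightarrow> (\<Sum>j<n. c i j) = 1"
    and col_sum: "\<And>j. j < n \<Longrightarrow> (\<Sum>i<n. c i j) = 1"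
begin

definition mix :: "(nat \<Rightarrow> 'a::real_vector) \<Rightarrow> nat \<Rightarrow> 'a" where
  "mix z i = (\<Sum>j<n. c i j *\<^sub>R z j)"

definition avg :: "(nat \<Rightarrow> 'a::real_vector) \<Rightarrow> 'a" where
  "avg z = (\<Sum>l<n. z l) /\<^sub>R real n"

definition consensus_error :: "(nat \<Rightarrow> 'a::real_normed_vector) \<Rightarrow> real" where
  "consensus_error z = L2_set (\<lambda>i. norm (z i - avg z)) {..<n}"

lemma mix_cong: "(\<And>j. j < n \<Longrightarrow> z j = z' j) \<Longrightarrow> mix z i = mix z' i"
  unfolding mix_def by simp

lemma mix_add_scaleR: "mix (\<lambda>j. z j + t *\<^sub>R z' j) i = mix z i + t *\<^sub>R mix z' i"
  unfolding mix_def by (simp add: algebra_simps sum.distrib scaleR_sum_right)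

lemma mix_diff_const: "i < n \<Longrightarrow> mix (\<lambda>j. z j - v) i = mix z i - v"
  unfolding mix_def by (simp add: scaleR_diff_right sum_subtractf row_sum flip: scaleR_sum_left)

lemma mix_in_convex:
  assumes "convex X" "\<And>j. j < n \<Longrightarrow> z j \<in> X" "i < n"
  shows "mix z i \<in> X"
  unfolding mix_def using assms nonneg row_sum by (intro convex_sum) auto

lemma norm_mix_le:
  assumes "\<And>j. j < n \<Longrightarrow> norm (z j) \<le> B" "i < n"
  shows "norm (mix z i) \<le> B"
proof -
  have "norm (mix z i) \<le> (\<Sum>j<n. c i j * B)"
    unfolding mix_def using assms nonneg
    by (intro order_trans[OF norm_sum] sum_mono) (auto intro: mult_left_mono)
  also have "\<dots> = B"
    using row_sum assms(2) by (simp flip: sum_distrib_right)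
  finally show ?thesis .
qed

lemma avg_in_convex:
  assumes "convex X" "\<And>j. j < n \<Longrightarrow> z j \<in> X"
  shows "avg z \<in> X"
proof -
  have "(\<Sum>l<n. (1 / real n) *\<^sub>R z l) \<in> X"
    using assms n_pos by (intro convex_sum) auto
  then show ?thesis
    by (simp add: avg_def divide_inverse_commute flip: scaleR_sum_right)
qed

lemma avg_mix: "avg (mix z) = avg z"
proof -
  have "(\<Sum>i<n. mix z i) = (\<Sum>j<n. (\<Sum>i<n. c i j) *\<^sub>R z j)"
    unfolding mix_def by (subst sum.swap) (simp add: scaleR_sum_left)
  then show ?thesis
    using col_sum by (simp add: avg_def)
qed

lemma consensus_error_cong:
  assumes "\<And>i. i < n \<Longrightarrow> z i = z' i"
  shows "consensus_error z = consensus_error z'"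
proof -
  have "avg z = avg z'"
    unfolding avg_def using assms by simp
  then show ?thesis
    unfolding consensus_error_def using assms by (intro L2_set_cong) auto
qed

lemma deviation_le_consensus_error: "i < n \<Longrightarrow> norm (z i - avg z) \<le> consensus_error z"
  unfolding consensus_error_def by (rule member_le_L2_set) auto

lemma consensus_error_le_diameter:
  assumes "convex X" "\<And>u v. u \<in> X \<Longrightarrow> v \<in> X \<Longrightarrow> norm (u - v) \<le> D"
    and "\<And>j. j < n \<Longrightarrow> z j \<in> X"
  shows "consensus_error z \<le> sqrt (real n) * D"
proof -
  have "0 \<le> D"
    using assms(2)[of "z 0" "z 0"] assms(3) n_pos by simp
  have "avg z \<in> X"
    using assms(1,3) by (rule avg_in_convex)
  then have "consensus_error z \<le> L2_set (\<lambda>_. D) {..<n}"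
    unfolding consensus_error_def using assms(2,3) by (intro L2_set_mono) auto
  also have "\<dots> = sqrt (real n) * D"
    using \<open>0 \<le> D\<close> by (simp add: L2_set_constant)
  finally show ?thesis .
qed

lemma consensus_error_convex_comb:
  assumes "0 \<le> t" "t \<le> 1"
  shows "consensus_error (\<lambda>i. (1 - t) *\<^sub>R z i + t *\<^sub>R z' i)
    \<le> (1 - t) * consensus_error z + t * consensus_error z'"
proof -
  have "(\<Sum>l<n. (1 - t) *\<^sub>R z l + t *\<^sub>R z' l) = (1 - t) *\<^sub>R (\<Sum>l<n. z l) + t *\<^sub>R (\<Sum>l<n. z' l)"
    by (simp add: sum.distrib scaleR_sum_right)
  then have avg: "avg (\<lambda>i. (1 - t) *\<^sub>R z i + t *\<^sub>R z' i) = (1 - t) *\<^sub>R avg z + t *\<^sub>R avg z'"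
    by (simp add: avg_def scaleR_add_right mult.commute)
  have "consensus_error (\<lambda>i. (1 - t) *\<^sub>R z i + t *\<^sub>R z' i)
      = L2_set (\<lambda>i. norm ((1 - t) *\<^sub>R (z i - avg z) + t *\<^sub>R (z' i - avg z'))) {..<n}"
    unfolding consensus_error_def avg by (simp add: algebra_simps)
  also have "\<dots> \<le> L2_set (\<lambda>i. (1 - t) * norm (z i - avg z) + t * norm (z' i - avg z')) {..<n}"
    using assms by (intro L2_set_mono) (auto intro: order_trans[OF norm_triangle_ineq])
  also have "\<dots> \<le> L2_set (\<lambda>i. (1 - t) * norm (z i - avg z)) {..<n}
      + L2_set (\<lambda>i. t * norm (z' i - avg z')) {..<n}"
    by (rule L2_set_triangle_ineq)
  also have "\<dots> = (1 - t) * consensus_error z + t * consensus_error z'"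
    using assms by (simp add: consensus_error_def L2_set_right_distrib)
  finally show ?thesis .
qed

end

locale fw_consensus = doubly_stochastic n c
  for n :: nat and c :: "nat \<Rightarrow> nat \<Rightarrow> real" +
  fixes r :: real and X :: "'a::real_normed_vector set" and D :: real
    and x \<theta> :: "nat \<Rightarrow> nat \<Rightarrow> 'a"
  assumes contraction: "\<And>z :: nat \<Rightarrow> 'a. consensus_error (mix z) \<le> r * consensus_error z"
    and r_nonneg: "0 \<le> r"
    and convex_X: "convex X"
    and diameter: "\<And>u v. u \<in> X \<Longrightarrow> v \<in> X \<Longrightarrow> norm (u - v) \<le> D"
    and x_init: "\<And>j. j < n \<Longrightarrow> x 1 j \<in> X"
    and lmo_in_X: "\<And>k i. 1 \<le> k \<Longrightarrow> i < n \<Longrightarrow> \<theta> k i \<in> X"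
    and x_step: "\<And>k i. 1 \<le> k \<Longrightarrow> i < n \<Longrightarrow>
      x (Suc k) i = mix (x k) i + (2 / (real k + 2)) *\<^sub>R (\<theta> k i - mix (x k) i)"
begin

lemma iterate_in_X: "1 \<le> k \<Longrightarrow> j < n \<Longrightarrow> x k j \<in> X"
proof (induction k arbitrary: j rule: nat_induct_at_least)
  case base
  then show ?case by (rule x_init)
next
  case (Suc k)
  have "x (Suc k) j = (1 - 2 / (real k + 2)) *\<^sub>R mix (x k) j + (2 / (real k + 2)) *\<^sub>R \<theta> k j"
    using x_step[OF Suc.hyps Suc.prems] by (simp add: algebra_simps)
  also have "\<dots> \<in> X"
    using mix_in_convex[OF convex_X Suc.IH Suc.prems] lmo_in_X[OF Suc.hyps Suc.prems]
    by (intro convexD[OF convex_X]) auto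
  finally show ?case .
qed

lemma mixed_in_X: "1 \<le> k \<Longrightarrow> i < n \<Longrightarrow> mix (x k) i \<in> X"
  using mix_in_convex[OF convex_X] iterate_in_X by blast

lemma D_nonneg: "0 \<le> D"
  using diameter[of "x 1 0" "x 1 0"] x_init n_pos by simp

lemma consensus_error_step:
  assumes "1 \<le> k"
  shows "consensus_error (x (Suc k))
    \<le> (1 - 2 / (real k + 2)) * (r * consensus_error (x k)) + 2 / (real k + 2) * (sqrt (real n) * D)"
proof -
  define t where "t = 2 / (real k + 2)"
  have t: "0 \<le> t" "t \<le> 1"
    unfolding t_def by auto
  have "consensus_error (x (Suc k)) = consensus_error (\<lambda>i. (1 - t) *\<^sub>R mix (x k) i + t *\<^sub>R \<theta> k i)"
    using x_step[OF assms] by (intro consensus_error_cong) (simp add: t_def algebra_simps)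
  also have "\<dots> \<le> (1 - t) * consensus_error (mix (x k)) + t * consensus_error (\<theta> k)"
    using t by (rule consensus_error_convex_comb)
  also have "\<dots> \<le> (1 - t) * (r * consensus_error (x k)) + t * (sqrt (real n) * D)"
    using t contraction consensus_error_le_diameter[OF convex_X diameter lmo_in_X[OF assms]]
    by (intro add_mono mult_left_mono) auto
  finally show ?thesis
    unfolding t_def .
qed

lemma consensus_error_decay:
  assumes "1 \<le> kk" "r \<le> real kk / (real kk + 1)" "1 \<le> m"
  shows "real m * consensus_error (x m) \<le> 4 * real kk * (sqrt (real n) * D)"
proof (rule averaging_recursion_decay[where e = "\<lambda>m. consensus_error (x m)", OF assms(1) r_nonneg assms(2)])
  show "0 \<le> sqrt (real n) * D"
    using D_nonneg by simp
  show "consensus_error (x 1) \<le> sqrt (real n) * D"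
    using iterate_in_X by (intro consensus_error_le_diameter[OF convex_X diameter]) auto
qed (use consensus_error_step assms(3) in auto)

lemma norm_mixed_step_le:
  assumes m: "1 \<le> m" and i: "i < n" and r_le_1: "r \<le> 1"
  shows "norm (mix (x (Suc m)) i - mix (x m) i) \<le> 2 * consensus_error (x m) + 2 / (real m + 2) * D"
proof -
  define t where "t = 2 / (real m + 2)"
  define w where "w = mix (x m)"
  have "mix (x (Suc m)) i = mix (\<lambda>j. w j + t *\<^sub>R (\<theta> m j - w j)) i"
    using x_step[OF m] unfolding w_def t_def by (intro mix_cong) auto
  also have "\<dots> = mix w i + t *\<^sub>R mix (\<lambda>j. \<theta> m j - w j) i"
    by (rule mix_add_scaleR)
  finally have diff: "mix (x (Suc m)) i - w i
      = (mix (\<lambda>j. w j - avg w) i - (w i - avg w)) + t *\<^sub>R mix (\<lambda>j. \<theta> m j - w j) i"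
    using mix_diff_const[OF i, of w "avg w"] by (simp add: algebra_simps)
  have n1: "norm (mix (\<lambda>j. w j - avg w) i) \<le> consensus_error w"
    using deviation_le_consensus_error by (rule norm_mix_le[OF _ i])
  have n2: "norm (w i - avg w) \<le> consensus_error w"
    by (rule deviation_le_consensus_error[OF i])
  have n3: "norm (mix (\<lambda>j. \<theta> m j - w j) i) \<le> D"
    unfolding w_def by (intro norm_mix_le[OF _ i] diameter lmo_in_X[OF m] mixed_in_X[OF m])
  have "norm (mix (x (Suc m)) i - w i)
      \<le> norm (mix (\<lambda>j. w j - avg w) i - (w i - avg w)) + norm (t *\<^sub>R mix (\<lambda>j. \<theta> m j - w j) i)"
    unfolding diff by (rule norm_triangle_ineq)
  also have "\<dots> \<le> consensus_error w + consensus_error w + t * D"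
    using norm_triangle_ineq4[of "mix (\<lambda>j. w j - avg w) i" "w i - avg w"] n1 n2
      mult_left_mono[OF n3, of t] by (simp add: t_def)
  also have "\<dots> \<le> 2 * consensus_error (x m) + t * D"
  proof -
    have "consensus_error w \<le> r * consensus_error (x m)"
      unfolding w_def by (rule contraction)
    also have "\<dots> \<le> consensus_error (x m)"
      using r_nonneg r_le_1 by (intro mult_left_le_one_le) (auto simp: consensus_error_def)
    finally show ?thesis by simp
  qed
  finally show ?thesis
    unfolding w_def t_def .
qed

lemma mixed_step_bound:
  assumes kk: "1 \<le> kk" "r \<le> real kk / (real kk + 1)" and m: "1 \<le> m" and i: "i < n"
  shows "real m * norm (mix (x (Suc m)) i - mix (x m) i) \<le> 2 * D + 8 * (real kk * sqrt (real n) * D)"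
proof -
  have "real kk / (real kk + 1) \<le> 1"
    by simp
  then have "r \<le> 1"
    using kk(2) by linarith
  then have "real m * norm (mix (x (Suc m)) i - mix (x m) i)
      \<le> real m * (2 * consensus_error (x m) + 2 / (real m + 2) * D)"
    using norm_mixed_step_le[OF m i] by (intro mult_left_mono) auto
  also have "\<dots> = 2 * (real m * consensus_error (x m)) + (2 * real m / (real m + 2)) * D"
    by (simp add: algebra_simps)
  also have "\<dots> \<le> 2 * (4 * real kk * (sqrt (real n) * D)) + 2 * D"
    using consensus_error_decay[OF kk m] D_nonneg
    by (intro add_mono mult_right_mono) (auto simp: field_simps)
  finally show ?thesis
    by simp
qed

end

lemma integrable_integral_comp_of_distr_eq:
  fixes f :: "'b \<Rightarrow> 'c::{banach, second_countable_topology}"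
  assumes "\<xi>\<^sub>1 \<in> measurable M S" "\<xi>\<^sub>2 \<in> measurable M S" "distr M S \<xi>\<^sub>1 = distr M S \<xi>\<^sub>2"
    and "f \<in> borel_measurable S" "integrable M (\<lambda>\<omega>. f (\<xi>\<^sub>2 \<omega>))"
  shows "integrable M (\<lambda>\<omega>. f (\<xi>\<^sub>1 \<omega>))"
    and "integral\<^sup>L M (\<lambda>\<omega>. f (\<xi>\<^sub>1 \<omega>)) = integral\<^sup>L M (\<lambda>\<omega>. f (\<xi>\<^sub>2 \<omega>))"
  using integrable_distr_eq[OF assms(1,4)] integrable_distr_eq[OF assms(2,4)]
    integral_distr[OF assms(1,4)] integral_distr[OF assms(2,4)] assms(3,5)
  by simp_all

lemma lipschitz_constant_nonneg:
  fixes g :: "'a::euclidean_space \<Rightarrow> 'b::real_normed_vector"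
  assumes "\<And>z w. norm (g z - g w) \<le> L * norm (z - w)"
  shows "0 \<le> L"
proof -
  obtain b :: 'a where "b \<in> Basis"
    using nonempty_Basis by blast
  then show ?thesis
    using order_trans[OF norm_ge_zero assms[of b 0]] by (simp add: norm_Basis)
qed

lemma norm_momentum_step_le:
  fixes y u v :: "'a::real_normed_vector"
  assumes "0 \<le> \<gamma>" "\<gamma> \<le> 1"
  shows "norm ((1 - \<gamma>) *\<^sub>R y + u - (1 - \<gamma>) *\<^sub>R v)
    \<le> (1 - \<gamma>) * norm y + \<gamma> * norm u + (1 - \<gamma>) * norm (u - v)"
proof -
  have "(1 - \<gamma>) *\<^sub>R y + u - (1 - \<gamma>) *\<^sub>R v = (1 - \<gamma>) *\<^sub>R y + \<gamma> *\<^sub>R u + (1 - \<gamma>) *\<^sub>R (u - v)"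
    by (simp add: algebra_simps)
  also have "norm \<dots> \<le> norm ((1 - \<gamma>) *\<^sub>R y) + norm (\<gamma> *\<^sub>R u) + norm ((1 - \<gamma>) *\<^sub>R (u - v))"
    by (intro order_trans[OF norm_triangle_ineq] add_right_mono norm_triangle_ineq)
  also have "\<dots> = (1 - \<gamma>) * norm y + \<gamma> * norm u + (1 - \<gamma>) * norm (u - v)"
    using assms by simp
  finally show ?thesis .
qed

lemma (in prob_space) nn_integral_le_of_recursive_bound:
  fixes Y h :: "nat \<Rightarrow> 'a \<Rightarrow> real" and a q :: "nat \<Rightarrow> real"
  assumes Y_nonneg: "\<And>k \<omega>. \<omega> \<in> space M \<Longrightarrow> 0 \<le> Y k \<omega>"
    and Y1: "integrable M (Y 1)" "expectation (Y 1) \<le> \<psi>"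
    and a: "\<And>k. 1 \<le> k \<Longrightarrow> 0 \<le> a k \<and> a k \<le> 1"
    and h_int: "\<And>k. 1 \<le> k \<Longrightarrow> integrable M (h k)"
    and Y_step: "\<And>k \<omega>. 1 \<le> k \<Longrightarrow> \<omega> \<in> space M \<Longrightarrow>
      Y (Suc k) \<omega> \<le> (1 - a k) * Y k \<omega> + a k * h k \<omega> + q k"
    and h_le: "\<And>k. 1 \<le> k \<Longrightarrow> a k * expectation (h k) + q k \<le> a k * \<psi>"
    and k: "1 \<le> k"
  shows "(\<integral>\<^sup>+\<omega>. ennreal (Y k \<omega>) \<partial>M) \<le> ennreal \<psi>"
proof -
  have "\<exists>Z. integrable M Z \<and> (\<forall>\<omega>\<in>space M. Y k \<omega> \<le> Z \<omega>) \<and> expectation Z \<le> \<psi>"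
    using k
  proof (induction k rule: nat_induct_at_least)
    case base
    then show ?case using Y1 by blast
  next
    case (Suc k)
    then obtain Z where Z: "integrable M Z" "\<And>\<omega>. \<omega> \<in> space M \<Longrightarrow> Y k \<omega> \<le> Z \<omega>" "expectation Z \<le> \<psi>"
      by blast
    define Z' where "Z' \<omega> = (1 - a k) * Z \<omega> + a k * h k \<omega> + q k" for \<omega>
    have "integrable M Z'"
      unfolding Z'_def using Z(1) h_int[OF Suc.hyps] by simp
    moreover have "Y (Suc k) \<omega> \<le> Z' \<omega>" if "\<omega> \<in> space M" for \<omega>
      using Y_step[OF Suc.hyps that] mult_left_mono[OF Z(2)[OF that], of "1 - a k"] a[OF Suc.hyps]
      unfolding Z'_def by simp
    moreover have "expectation Z' \<le> \<psi>"
    proof -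
      have "expectation Z' = (1 - a k) * expectation Z + (a k * expectation (h k) + q k)"
        unfolding Z'_def using Z(1) h_int[OF Suc.hyps] by (simp add: prob_space)
      also have "\<dots> \<le> (1 - a k) * \<psi> + a k * \<psi>"
        using Z(3) a[OF Suc.hyps] h_le[OF Suc.hyps] by (intro add_mono mult_left_mono) auto
      finally show ?thesis
        by (simp add: algebra_simps)
    qed
    ultimately show ?case
      by blast
  qed
  then obtain Z where Z: "integrable M Z" "\<And>\<omega>. \<omega> \<in> space M \<Longrightarrow> Y k \<omega> \<le> Z \<omega>" "expectation Z \<le> \<psi>"
    by blast
  have "(\<integral>\<^sup>+\<omega>. ennreal (Y k \<omega>) \<partial>M) \<le> (\<integral>\<^sup>+\<omega>. ennreal (Z \<omega>) \<partial>M)"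
    using Z(2) by (intro nn_integral_mono ennreal_leI) auto
  also have "\<dots> = ennreal (expectation Z)"
    using Z(1,2) Y_nonneg by (intro nn_integral_eq_integral AE_I2) (auto intro: order_trans)
  also have "\<dots> \<le> ennreal \<psi>"
    using Z(3) by (rule ennreal_leI)
  finally show ?thesis .
qed

lemma (in prob_space) nn_integral_norm_momentum_le:
  fixes y w :: "nat \<Rightarrow> 'a \<Rightarrow> 'v::euclidean_space" and g :: "'v \<Rightarrow> 'b \<Rightarrow> 'v"
    and \<xi> :: "'a \<Rightarrow> 'b" and \<xi>s :: "nat \<Rightarrow> 'a \<Rightarrow> 'b"
  assumes lipschitz: "\<And>e z z'. e \<in> space S \<Longrightarrow> norm (g z e - g z' e) \<le> L * norm (z - z')"
    and diameter: "\<And>u v. u \<in> X \<Longrightarrow> v \<in> X \<Longrightarrow> norm (u - v) \<le> D"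
    and w_in: "\<And>k \<omega>. 1 \<le> k \<Longrightarrow> \<omega> \<in> space M \<Longrightarrow> w k \<omega> \<in> X"
    and w_step: "\<And>k \<omega>. 1 \<le> k \<Longrightarrow> \<omega> \<in> space M \<Longrightarrow> real k * norm (w (Suc k) \<omega> - w k \<omega>) \<le> B"
    and \<xi>: "\<xi> \<in> measurable M S"
    and \<xi>s: "\<And>k. 1 \<le> k \<Longrightarrow> \<xi>s k \<in> measurable M S"
    and \<xi>s_distr: "\<And>k. 1 \<le> k \<Longrightarrow> distr M S (\<xi>s k) = distr M S \<xi>"
    and g_meas: "\<And>z. g z \<in> borel_measurable S"
    and g_int: "\<And>z. z \<in> X \<Longrightarrow> integrable M (\<lambda>\<omega>. norm (g z (\<xi> \<omega>)))"
    and g_le: "\<And>z. z \<in> X \<Longrightarrow> expectation (\<lambda>\<omega>. norm (g z (\<xi> \<omega>))) \<le> G"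
    and y_init: "\<And>\<omega>. \<omega> \<in> space M \<Longrightarrow> y 1 \<omega> = g w\<^sub>1 (\<xi>s 1 \<omega>)" and "w\<^sub>1 \<in> X"
    and \<psi>: "expectation (\<lambda>\<omega>. norm (y 1 \<omega>)) \<le> \<psi>" "G + L * D + L * B / 2 \<le> \<psi>"
    and y_step: "\<And>k \<omega>. 1 \<le> k \<Longrightarrow> \<omega> \<in> space M \<Longrightarrow>
      y (Suc k) \<omega> = (1 - 2 / (real k + 2)) *\<^sub>R y k \<omega> + g (w (Suc k) \<omega>) (\<xi>s (Suc k) \<omega>)
                    - (1 - 2 / (real k + 2)) *\<^sub>R g (w k \<omega>) (\<xi>s (Suc k) \<omega>)"
    and k: "1 \<le> k"
  shows "(\<integral>\<^sup>+\<omega>. ennreal (norm (y k \<omega>)) \<partial>M) \<le> ennreal \<psi>"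
proof -
  obtain \<omega>\<^sub>0 where \<omega>\<^sub>0: "\<omega>\<^sub>0 \<in> space M"
    using not_empty by blast
  then have L: "0 \<le> L"
    using lipschitz_constant_nonneg[of "\<lambda>z. g z (\<xi> \<omega>\<^sub>0)"] lipschitz measurable_space[OF \<xi>] by blast
  obtain z\<^sub>0 where "z\<^sub>0 \<in> X"
    using w_in[OF order_refl \<omega>\<^sub>0] by blast
  have [measurable]: "g z \<in> borel_measurable S" for z
    by (rule g_meas)
  have sample: "integrable M (\<lambda>\<omega>. norm (g z (\<xi>s k \<omega>)))"
    "expectation (\<lambda>\<omega>. norm (g z (\<xi>s k \<omega>))) \<le> G" if "z \<in> X" "1 \<le> k" for z k
    using integrable_integral_comp_of_distr_eq[OF \<xi>s[OF that(2)] \<xi> \<xi>s_distr[OF that(2)] _ g_int[OF that(1)]]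
      g_le[OF that(1)] by simp_all
  have "integrable M (\<lambda>\<omega>. norm (y 1 \<omega>)) \<longleftrightarrow> integrable M (\<lambda>\<omega>. norm (g w\<^sub>1 (\<xi>s 1 \<omega>)))"
    using y_init by (intro Bochner_Integration.integrable_cong) auto
  then have y1_int: "integrable M (\<lambda>\<omega>. norm (y 1 \<omega>))"
    using sample(1)[OF \<open>w\<^sub>1 \<in> X\<close> order_refl] by simp
  show ?thesis
  proof (rule nn_integral_le_of_recursive_bound[where Y = "\<lambda>k \<omega>. norm (y k \<omega>)"
        and a = "\<lambda>k. 2 / (real k + 2)" and h = "\<lambda>k \<omega>. norm (g z\<^sub>0 (\<xi>s (Suc k) \<omega>)) + L * D"
          and q = "\<lambda>k. L * B / (real k + 2)", OF _ y1_int \<psi>(1) _ _ _ _ k])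
    fix k :: nat and \<omega> assume k: "1 \<le> k" and \<omega>: "\<omega> \<in> space M"
    let ?t = "2 / (real k + 2)" and ?e = "\<xi>s (Suc k) \<omega>"
    have t: "0 \<le> ?t" "?t \<le> 1" "1 - ?t = real k / (real k + 2)"
      by (auto simp: field_simps)
    have e: "?e \<in> space S"
      using \<xi>s[of "Suc k"] \<omega> by (auto intro: measurable_space)
    have w_near: "norm (w (Suc k) \<omega> - z\<^sub>0) \<le> D"
      by (intro diameter w_in \<omega> \<open>z\<^sub>0 \<in> X\<close>) simp
    have near: "norm (g (w (Suc k) \<omega>) ?e) \<le> norm (g z\<^sub>0 ?e) + L * D"
      using lipschitz[OF e, of "w (Suc k) \<omega>" z\<^sub>0] mult_left_mono[OF w_near L]
        norm_triangle_ineq2[of "g (w (Suc k) \<omega>) ?e" "g z\<^sub>0 ?e"]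
      by simp
    have jump: "(1 - ?t) * norm (g (w (Suc k) \<omega>) ?e - g (w k \<omega>) ?e) \<le> L * B / (real k + 2)"
    proof -
      have "(1 - ?t) * norm (g (w (Suc k) \<omega>) ?e - g (w k \<omega>) ?e)
          \<le> (1 - ?t) * (L * norm (w (Suc k) \<omega> - w k \<omega>))"
        using lipschitz[OF e] t by (intro mult_left_mono) auto
      also have "\<dots> = L * (real k * norm (w (Suc k) \<omega> - w k \<omega>)) / (real k + 2)"
        unfolding t(3) by simp
      also have "\<dots> \<le> L * B / (real k + 2)"
        using w_step[OF k \<omega>] L by (intro divide_right_mono mult_left_mono) auto
      finally show ?thesis .
    qed
    have "norm (y (Suc k) \<omega>) \<le> (1 - ?t) * norm (y k \<omega>) + ?t * norm (g (w (Suc k) \<omega>) ?e)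
        + (1 - ?t) * norm (g (w (Suc k) \<omega>) ?e - g (w k \<omega>) ?e)"
      unfolding y_step[OF k \<omega>] using t by (intro norm_momentum_step_le)
    also have "\<dots> \<le> (1 - ?t) * norm (y k \<omega>) + ?t * (norm (g z\<^sub>0 ?e) + L * D) + L * B / (real k + 2)"
      using near jump t by (intro add_mono mult_left_mono) auto
    finally show "norm (y (Suc k) \<omega>)
        \<le> (1 - ?t) * norm (y k \<omega>) + ?t * (norm (g z\<^sub>0 ?e) + L * D) + L * B / (real k + 2)" .
  next
    fix k :: nat
    define E where "E = expectation (\<lambda>\<omega>. norm (g z\<^sub>0 (\<xi>s (Suc k) \<omega>)))"
    have "expectation (\<lambda>\<omega>. norm (g z\<^sub>0 (\<xi>s (Suc k) \<omega>)) + L * D) = E + L * D"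
      unfolding E_def using sample(1)[OF \<open>z\<^sub>0 \<in> X\<close>, of "Suc k"] by (simp add: prob_space)
    moreover have "(2 * (E + L * D) + L * B) / (real k + 2) \<le> 2 * \<psi> / (real k + 2)"
      using sample(2)[OF \<open>z\<^sub>0 \<in> X\<close>, of "Suc k"] \<psi>(2) unfolding E_def by (intro divide_right_mono) auto
    ultimately show "2 / (real k + 2) * expectation (\<lambda>\<omega>. norm (g z\<^sub>0 (\<xi>s (Suc k) \<omega>)) + L * D)
        + L * B / (real k + 2) \<le> 2 / (real k + 2) * \<psi>"
      by (simp add: add_divide_distrib)
  qed (use sample(1)[OF \<open>z\<^sub>0 \<in> X\<close>] in auto)
qed

theorem lemma8:
  fixes M :: "'m measure" and S :: "'b measure"
    and n :: nat and E :: "(nat \<times> nat) set" and C :: "real mat"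
    and X :: "'a::euclidean_space set" and D L \<delta> G :: real
    and f :: "nat \<Rightarrow> 'a \<Rightarrow> 'b \<Rightarrow> real"
    and gf :: "nat \<Rightarrow> 'a \<Rightarrow> 'b \<Rightarrow> 'a"
    and \<xi> :: "nat \<Rightarrow> 'm \<Rightarrow> 'b"
    and \<xi>s :: "nat \<Rightarrow> nat \<Rightarrow> 'm \<Rightarrow> 'b"
    and x1 :: "nat \<Rightarrow> 'a"
    and x xh y s p \<theta> :: "nat \<Rightarrow> nat \<Rightarrow> 'm \<Rightarrow> 'a"
    and \<gamma> \<eta> :: "nat \<Rightarrow> real"
  assumes M: "prob_space M"
    \<comment> \<open>communication graph: undirected, connected, on agents 0..n-1\<close>
    and n_pos: "0 < n"
    and E_sub: "E \<subseteq> {..<n} \<times> {..<n}"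
    and E_sym: "sym E"
    and E_conn: "\<forall>i<n. \<forall>j<n. (i, j) \<in> E\<^sup>*"
    \<comment> \<open>weight matrix\<close>
    and C_dim: "C \<in> carrier_mat n n"
    and C_nonneg: "\<forall>i<n. \<forall>j<n. 0 \<le> C $$ (i, j)"
    and C_supp: "\<forall>i<n. \<forall>j<n. j \<noteq> i \<and> (i, j) \<notin> E \<longrightarrow> C $$ (i, j) = 0"
    and C_row: "\<forall>i<n. (\<Sum>j<n. C $$ (i, j)) = 1"
    and C_col: "\<forall>j<n. (\<Sum>i<n. C $$ (i, j)) = 1"
    and lam_lt1: "\<bar>second_eig_mod C\<bar> < 1"
    and contr: "\<forall>z :: nat \<Rightarrow> 'a.
       sqrt (\<Sum>i<n. (norm ((\<Sum>j<n. C $$ (i, j) *\<^sub>R z j) - (\<Sum>l<n. z l) /\<^sub>R real n))\<^sup>2)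
       \<le> \<bar>second_eig_mod C\<bar> * sqrt (\<Sum>i<n. (norm (z i - (\<Sum>l<n. z l) /\<^sub>R real n))\<^sup>2)"
    \<comment> \<open>constraint set\<close>
    and X_convex: "convex X" and X_compact: "compact X" and X_ne: "X \<noteq> {}"
    and X_diam: "\<forall>u\<in>X. \<forall>v\<in>X. norm (u - v) \<le> D"
    \<comment> \<open>random variables and stochastic gradients\<close>
    and xi_rv: "\<forall>i<n. \<xi> i \<in> measurable M S"
    and gf_meas: "\<forall>i<n. \<forall>z. gf i z \<in> borel_measurable S"
    and f_deriv: "\<forall>i<n. \<forall>e\<in>space S. \<forall>z.
       ((\<lambda>w. f i w e) has_derivative (\<lambda>h. gf i z e \<bullet> h)) (at z)"
    and gf_lip: "\<forall>i<n. \<forall>e\<in>space S. \<forall>z w. norm (gf i z e - gf i w e) \<le> L * norm (z - w)"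
    and f_int: "\<forall>i<n. \<forall>z. integrable M (\<lambda>\<omega>. f i z (\<xi> i \<omega>))"
    and gf_int: "\<forall>i<n. \<forall>z. integrable M (\<lambda>\<omega>. gf i z (\<xi> i \<omega>))"
    and F_deriv: "\<forall>i<n. \<forall>z.
       ((\<lambda>w. prob_space.expectation M (\<lambda>\<omega>. f i w (\<xi> i \<omega>))) has_derivative
          (\<lambda>h. prob_space.expectation M (\<lambda>\<omega>. gf i z (\<xi> i \<omega>)) \<bullet> h)) (at z)"
    and F_lip: "\<forall>i<n. \<forall>z w.
       norm (prob_space.expectation M (\<lambda>\<omega>. gf i z (\<xi> i \<omega>))
             - prob_space.expectation M (\<lambda>\<omega>. gf i w (\<xi> i \<omega>))) \<le> L * norm (z - w)"
    and var_bound: "\<forall>i<n. \<forall>z\<in>X.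
       prob_space.expectation M (\<lambda>\<omega>. (norm (prob_space.expectation M (\<lambda>\<omega>'. gf i z (\<xi> i \<omega>'))
                                            - gf i z (\<xi> i \<omega>)))\<^sup>2) \<le> \<delta>\<^sup>2"
    and G_pos: "0 < G"
    and gf_sq_int: "\<forall>i<n. \<forall>z\<in>X. integrable M (\<lambda>\<omega>. (norm (gf i z (\<xi> i \<omega>)))\<^sup>2)"
    and gf_norm_int: "\<forall>i<n. \<forall>z\<in>X. integrable M (\<lambda>\<omega>. norm (gf i z (\<xi> i \<omega>)))"
    and G_sq: "\<forall>i<n. \<forall>z\<in>X. prob_space.expectation M (\<lambda>\<omega>. (norm (gf i z (\<xi> i \<omega>)))\<^sup>2) \<le> G\<^sup>2"
    and G_norm: "\<forall>i<n. \<forall>z\<in>X. prob_space.expectation M (\<lambda>\<omega>. norm (gf i z (\<xi> i \<omega>))) \<le> G"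
    \<comment> \<open>i.i.d. samples\<close>
    and samples_indep: "prob_space.indep_vars M (\<lambda>_. S) (\<lambda>(k, i). \<xi>s k i) ({1..} \<times> {..<n})"
    and samples_distr: "\<forall>k\<ge>1. \<forall>i<n. distr M S (\<xi>s k i) = distr M S (\<xi> i)"
    \<comment> \<open>step sizes\<close>
    and gamma_def: "\<forall>k. \<gamma> k = 2 / (real k + 1)"
    and eta_def: "\<forall>k. \<eta> k = 2 / (real k + 2)"
    \<comment> \<open>DMFW iterates\<close>
    and x1_in: "\<forall>i<n. x1 i \<in> X"
    and x_init: "\<forall>i<n. \<forall>\<omega>\<in>space M. x 1 i \<omega> = x1 i"
    and xh_def: "\<forall>k\<ge>1. \<forall>i<n. \<forall>\<omega>\<in>space M. xh k i \<omega> = (\<Sum>j<n. C $$ (i, j) *\<^sub>R x k j \<omega>)"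
    and y_init: "\<forall>i<n. \<forall>\<omega>\<in>space M. y 1 i \<omega> = gf i (xh 1 i \<omega>) (\<xi>s 1 i \<omega>)"
    and s_init: "\<forall>i<n. \<forall>\<omega>\<in>space M. s 1 i \<omega> = y 1 i \<omega>"
    and y_step: "\<forall>k\<ge>2. \<forall>i<n. \<forall>\<omega>\<in>space M.
       y k i \<omega> = (1 - \<gamma> k) *\<^sub>R y (k - 1) i \<omega> + gf i (xh k i \<omega>) (\<xi>s k i \<omega>)
                   - (1 - \<gamma> k) *\<^sub>R gf i (xh (k - 1) i \<omega>) (\<xi>s k i \<omega>)"
    and s_step: "\<forall>k\<ge>2. \<forall>i<n. \<forall>\<omega>\<in>space M.
       s k i \<omega> = (\<Sum>j<n. C $$ (i, j) *\<^sub>R s (k - 1) j \<omega>) + y k i \<omega> - y (k - 1) i \<omega>"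
    and p_def: "\<forall>k\<ge>1. \<forall>i<n. \<forall>\<omega>\<in>space M. p k i \<omega> = (\<Sum>j<n. C $$ (i, j) *\<^sub>R s k j \<omega>)"
    and theta_lmo: "\<forall>k\<ge>1. \<forall>i<n. \<forall>\<omega>\<in>space M.
       \<theta> k i \<omega> \<in> X \<and> (\<forall>\<phi>\<in>X. p k i \<omega> \<bullet> \<theta> k i \<omega> \<le> p k i \<omega> \<bullet> \<phi>)"
    and theta_meas: "\<forall>k\<ge>1. \<forall>i<n. \<theta> k i \<in> borel_measurable M"
    and x_step: "\<forall>k\<ge>1. \<forall>i<n. \<forall>\<omega>\<in>space M.
       x (k + 1) i \<omega> = xh k i \<omega> + \<eta> k *\<^sub>R (\<theta> k i \<omega> - xh k i \<omega>)"
  shows "\<forall>i<n. \<forall>k\<ge>1.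
     (\<integral>\<^sup>+ \<omega>. ennreal (norm (y k i \<omega>)) \<partial>M)
       \<le> ennreal (max (Max ((\<lambda>j. prob_space.expectation M (\<lambda>\<omega>. norm (y 1 j \<omega>))) ` {..<n}))
                        (2 * G + 2 * L * (D + 2 * (real (k0_of (second_eig_mod C)) * sqrt (real n) * D))))"
proof -
  interpret prob_space M
    by (rule M)
  interpret W: doubly_stochastic n "\<lambda>i j. C $$ (i, j)"
    using n_pos C_nonneg C_row C_col by unfold_locales auto
  define k0 where "k0 = k0_of (second_eig_mod C)"
  define B where "B = 2 * D + 8 * (real k0 * sqrt (real n) * D)"
  define \<psi> where "\<psi> = max (Max ((\<lambda>j. expectation (\<lambda>\<omega>. norm (y 1 j \<omega>))) ` {..<n}))
    (2 * G + 2 * L * (D + 2 * (real k0 * sqrt (real n) * D)))"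
  have k0: "1 \<le> k0" "\<bar>second_eig_mod C\<bar> \<le> real k0 / (real k0 + 1)"
    using k0_of_spec(1)[OF lam_lt1] abs_le_k0_of_ratio[OF lam_lt1] unfolding k0_def by auto
  have xh_mix: "xh k i \<omega> = W.mix (\<lambda>j. x k j \<omega>) i" if "1 \<le> k" "i < n" "\<omega> \<in> space M" for k i \<omega>
    using xh_def that unfolding W.mix_def by simp
  have FW: "fw_consensus n (\<lambda>i j. C $$ (i, j)) \<bar>second_eig_mod C\<bar> X D (\<lambda>k j. x k j \<omega>) (\<lambda>k j. \<theta> k j \<omega>)"
    if \<omega>: "\<omega> \<in> space M" for \<omega>
  proof unfold_locales
    fix z :: "nat \<Rightarrow> 'a"
    have "W.consensus_error (W.mix z) = L2_set (\<lambda>i. norm (W.mix z i - W.avg z)) {..<n}"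
      by (simp add: W.consensus_error_def W.avg_mix)
    then show "W.consensus_error (W.mix z) \<le> \<bar>second_eig_mod C\<bar> * W.consensus_error z"
      using contr[rule_format, of z] by (simp add: W.consensus_error_def L2_set_def W.mix_def W.avg_def)
  qed (use X_convex X_diam x_init x1_in theta_lmo x_step eta_def xh_mix \<omega> in auto)
  have mixed: "xh k i \<omega> \<in> X" "real k * norm (xh (Suc k) i \<omega> - xh k i \<omega>) \<le> B"
    if "1 \<le> k" "i < n" "\<omega> \<in> space M" for k i \<omega>
    using fw_consensus.mixed_in_X[OF FW] fw_consensus.mixed_step_bound[OF FW k0] that
    by (simp_all add: xh_mix B_def)
  have \<xi>s_meas: "\<xi>s k i \<in> measurable M S" if "1 \<le> k" "i < n" for k i
    using samples_indep that unfolding indep_vars_def2 by fastforce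
  have "\<forall>i<n. \<forall>k\<ge>1. (\<integral>\<^sup>+\<omega>. ennreal (norm (y k i \<omega>)) \<partial>M) \<le> ennreal \<psi>"
  proof (intro allI impI)
    fix i k :: nat assume i: "i < n" and k: "1 \<le> k"
    define w\<^sub>1 where "w\<^sub>1 = (\<Sum>j<n. C $$ (i, j) *\<^sub>R x1 j)"
    have "w\<^sub>1 \<in> X"
      unfolding w\<^sub>1_def using W.mix_in_convex[OF X_convex, of x1 i] x1_in i by (simp add: W.mix_def)
    have y1: "y 1 i \<omega> = gf i w\<^sub>1 (\<xi>s 1 i \<omega>)" if "\<omega> \<in> space M" for \<omega>
      using y_init xh_def x_init i that unfolding w\<^sub>1_def by simp
    show "(\<integral>\<^sup>+\<omega>. ennreal (norm (y k i \<omega>)) \<partial>M) \<le> ennreal \<psi>"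
    proof (rule nn_integral_norm_momentum_le[where y = "\<lambda>k \<omega>. y k i \<omega>" and w = "\<lambda>k \<omega>. xh k i \<omega>"
          and g = "gf i" and \<xi>s = "\<lambda>k. \<xi>s k i" and w\<^sub>1 = w\<^sub>1 and B = B,
          OF _ _ _ _ xi_rv[rule_format, OF i] _ _ _ _ _ y1 \<open>w\<^sub>1 \<in> X\<close> _ _ _ k])
      show "expectation (\<lambda>\<omega>. norm (y 1 i \<omega>)) \<le> \<psi>"
        unfolding \<psi>_def using i by (intro max.coboundedI1 Max_ge) auto
      show "G + L * D + L * B / 2 \<le> \<psi>"
        unfolding \<psi>_def B_def using G_pos by (intro max.coboundedI2) (simp add: algebra_simps)
      show "y (Suc k) i \<omega> = (1 - 2 / (real k + 2)) *\<^sub>R y k i \<omega> + gf i (xh (Suc k) i \<omega>) (\<xi>s (Suc k) i \<omega>)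
          - (1 - 2 / (real k + 2)) *\<^sub>R gf i (xh k i \<omega>) (\<xi>s (Suc k) i \<omega>)"
        if "1 \<le> k" "\<omega> \<in> space M" for k \<omega>
        using y_step[rule_format, of "Suc k" i \<omega>] gamma_def that i by (simp add: add.commute)
    qed (use gf_lip gf_meas gf_norm_int G_norm X_diam mixed \<xi>s_meas samples_distr i in auto)
  qed
  then show ?thesis
    unfolding \<psi>_def k0_def .
qed

end
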